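(* Consider the unknown polynomial system $\dot x=A_\star Z(x)+B_\star W(x)u$ with $x\in\mathbb{R}^n$, $u\in\mathbb{R}^m$, and data $\{\dot x^j,z^j,v^j\}_{j=0}^{T-1}$ generated by $\dot x^j=A_\star z^j+B_\star v^j+d^j$, where the unknown disturbance samples satisfy $|d^j|^2\le\omega$ for all $j=0,\dots,T-1$, for a known $\omega\ge 0$. Let $\epsilon>0$. Assume that there exist a symmetric $A_{\mathrm{i}}\in\mathbb{R}^{p\times p}$, $B_{\mathrm{i}}\in\mathbb{R}^{p\times n}$ and $\tau_0,\dots,\tau_{T-1}$ satisfying the constraints $$\begin{bmatrix}-I-\sum_{j}\tau_jc_j & B_{\mathrm{i}}^\top-\sum_{j}\tau_jb_j^\top & B_{\mathrm{i}}^\top\\ B_{\mathrm{i}}-\sum_{j}\tau_jb_j & A_{\mathrm{i}}-\sum_{j}\tau_ja_j & 0\\ B_{\mathrm{i}} & 0 & -A_{\mathrm{i}}\end{bmatrix}\preceq 0,\quad A_{\mathrm{i}}\succ 0,\quad \tau_j\ge0,$$ (sums over $j=0,\dots,T-1$), and set $\bar\zeta:=-A_{\mathrm{i}}^{-1}B_{\mathrm{i}}\in\mathbb{R}^{p\times n}$, $\bar P:=A_{\mathrm{i}}^{-1/2}$, $\bar Q:=I_n$. Assume there exist polynomials $\ell,\eta,h:\mathbb{R}^n\to\mathbb{R}$ and a polynomial $K:\mathbb{R}^n\to\mathbb{R}^m$ such that for all $x\in\mathbb{R}^n$, $\eta(x)>0$ and $H(x)\preceq0$, where $$H(x):=\begin{bmatrix}\ell(x)h(x)+\epsilon+\frac{\partial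 h}{\partial x}(x)\,\bar\zeta^\top\begin{bmatrix}Z(x)\\ W(x)K(x)\end{bmatrix} & \star & \star\\ \eta(x)\bar P\begin{bmatrix}Z(x)\\ W(x)K(x)\end{bmatrix} & -2\eta(x)I_p & \star\\ \bar Q^{1/2}\frac{\partial h}{\partial x}(x)^\top & 0 & -2\eta(x)I_n\end{bmatrix}\in\mathbb{R}^{(1+p+n)\times(1+p+n)}.$$ Then the set $\mathcal{I}:=\{x\in\mathbb{R}^n: h(x)\le0\}$ is invariant for the closed-loop system $\dot x=A_\star Z(x)+B_\star W(x)K(x)$.
   Context: $A_\star\in\mathbb{R}^{n\times N_A}$, $B_\star\in\mathbb{R}^{n\times N_B}$ are unknown constant matrices; $Z:\mathbb{R}^n\to\mathbb{R}^{N_A}$ is a known vector of monomials and $W:\mathbb{R}^n\to\mathbb{R}^{N_B\times m}$ a known matrix of monomials; $p:=N_A+N_B$. The data are $z^j=Z(x^j)$, $v^j=W(x^j)u^j$ for sampled states $x^j$ and inputs $u^j$, and $\dot x^j$ the sampled state derivative. Define $c_j:=-\omega I_n+\dot x^j(\dot x^j)^\top$, $b_j:=-\begin{bmatrix}z^j\\ v^j\end{bmatrix}(\dot x^j)^\top$, $a_j:=\begin{bmatrix}z^j\\ v^j\end{bmatrix}\begin{bmatrix}z^j\\ v^j\end{bmatrix}^\top$. $\star$ denotes blocks determined by symmetry; $M^{1/2}$ is the positive semidefinite square root; $\frac{\partial h}{\partial x}(x)$ is the gradient as a row vector. A set $\mathcal{I}$ is invariant for $\dot x=a(x)$ ($a$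 polynomial) if every maximal solution starting in $\mathcal{I}$ remains in $\mathcal{I}$ on its whole interval of existence $[0,T(x_0))$. *)

theory Defs
  imports "HOL-Analysis.Analysis"
begin

inductive poly_fun :: "(real^'n \<Rightarrow> real) \<Rightarrow> bool" where
  pf_const: "poly_fun (\<lambda>x. c)"
| pf_coord: "poly_fun (\<lambda>x. x $ i)"
| pf_add: "poly_fun f \<Longrightarrow> poly_fun g \<Longrightarrow> poly_fun (\<lambda>x. f x + g x)"
| pf_mult: "poly_fun f \<Longrightarrow> poly_fun g \<Longrightarrow> poly_fun (\<lambda>x. f x * g x)"

definition poly_vec :: "(real^'n \<Rightarrow> real^'k) \<Rightarrow> bool" where
  "poly_vec F \<longleftrightarrow> (\<forall>i. poly_fun (\<lambda>x. F x $ i))"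

definition poly_mat :: "(real^'n \<Rightarrow> real^'c^'r) \<Rightarrow> bool" where
  "poly_mat F \<longleftrightarrow> (\<forall>i j. poly_fun (\<lambda>x. F x $ i $ j))"

definition nsd :: "real^'a^'a \<Rightarrow> bool" where
  "nsd M \<longleftrightarrow> (\<forall>v. v \<bullet> (M *v v) \<le> 0)"

definition psd :: "real^'a^'a \<Rightarrow> bool" where
  "psd M \<longleftrightarrow> (\<forall>v. v \<bullet> (M *v v) \<ge> 0)"

definition pd :: "real^'a^'a \<Rightarrow> bool" where
  "pd M \<longleftrightarrow> (\<forall>v. v \<noteq> 0 \<longrightarrow> v \<bullet> (M *v v) > 0)"

definition symmetric_mat :: "real^'a^'a \<Rightarrow> bool" where
  "symmetric_mat M \<longleftrightarrow> transpose M = M"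

definition psd_sqrt :: "real^'a^'a \<Rightarrow> real^'a^'a" where
  "psd_sqrt M = (THE S. symmetric_mat S \<and> psd S \<and> S ** S = M)"

definition outer :: "real^'a \<Rightarrow> real^'b \<Rightarrow> real^'b^'a" where
  "outer a b = (\<chi> i j. a $ i * b $ j)"

definition vconcat :: "real^'a \<Rightarrow> real^'b \<Rightarrow> real^('a + 'b)" where
  "vconcat a b = (\<chi> i. case i of Inl k \<Rightarrow> a $ k | Inr k \<Rightarrow> b $ k)"

definition block3 ::
  "real^'a^'a \<Rightarrow> real^'b^'a \<Rightarrow> real^'c^'a \<Rightarrow>
   real^'a^'b \<Rightarrow> real^'b^'b \<Rightarrow> real^'c^'b \<Rightarrow>
   real^'a^'c \<Rightarrow> real^'b^'c \<Rightarrow> real^'c^'c \<Rightarrow> real^('a + ('b + 'c))^('a + ('b + 'c))" where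
  "block3 M11 M12 M13 M21 M22 M23 M31 M32 M33 =
     (\<chi> i j. case i of
        Inl r \<Rightarrow> (case j of Inl c \<Rightarrow> M11 $ r $ c | Inr (Inl c) \<Rightarrow> M12 $ r $ c | Inr (Inr c) \<Rightarrow> M13 $ r $ c)
      | Inr (Inl r) \<Rightarrow> (case j of Inl c \<Rightarrow> M21 $ r $ c | Inr (Inl c) \<Rightarrow> M22 $ r $ c | Inr (Inr c) \<Rightarrow> M23 $ r $ c)
      | Inr (Inr r) \<Rightarrow> (case j of Inl c \<Rightarrow> M31 $ r $ c | Inr (Inl c) \<Rightarrow> M32 $ r $ c | Inr (Inr c) \<Rightarrow> M33 $ r $ c))"

definition col :: "real^'k \<Rightarrow> real^unit^'k" where
  "col v = (\<chi> i j. v $ i)"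

definition grad :: "(real^'n \<Rightarrow> real) \<Rightarrow> real^'n \<Rightarrow> real^'n" where
  "grad h x = (\<chi> i. frechet_derivative h (at x) (axis i 1))"

definition sol_dom :: "ereal \<Rightarrow> real set" where
  "sol_dom Tm = {t. 0 \<le> t \<and> ereal t < Tm}"

definition is_solution :: "(real^'n \<Rightarrow> real^'n) \<Rightarrow> real^'n \<Rightarrow> ereal \<Rightarrow> (real \<Rightarrow> real^'n) \<Rightarrow> bool" where
  "is_solution a x0 Tm X \<longleftrightarrow> 0 < Tm \<and> X 0 = x0 \<and>
     (\<forall>t \<in> sol_dom Tm. (X has_vector_derivative a (X t)) (at t within sol_dom Tm))"

definition is_maximal_solution :: "(real^'n \<Rightarrow> real^'n) \<Rightarrow> real^'n \<Rightarrow> ereal \<Rightarrow> (real \<Rightarrow> real^'n) \<Rightarrow> bool" where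
  "is_maximal_solution a x0 Tm X \<longleftrightarrow> is_solution a x0 Tm X \<and>
     \<not> (\<exists>T' Y. Tm < T' \<and> is_solution a x0 T' Y \<and> (\<forall>t \<in> sol_dom Tm. Y t = X t))"

definition invariant :: "(real^'n \<Rightarrow> real^'n) \<Rightarrow> (real^'n) set \<Rightarrow> bool" where
  "invariant a S \<longleftrightarrow> (\<forall>x0 \<in> S. \<forall>Tm X. is_maximal_solution a x0 Tm X \<longrightarrow> (\<forall>t \<in> sol_dom Tm. X t \<in> S))"

end

theory Submission
  imports Defs
begin

text \<open>
  The data LMI is an S-procedure certificate: every matrix \<open>[A B]\<close> that explains the
  samples up to a disturbance of size \<open>\<omega>\<close> lies in the ellipsoid
  \<open>(M\<^sup>T - \<zeta>) x \<bullet> A\<^sub>i (M\<^sup>T - \<zeta>) x \<le> |x|\<^sup>2\<close>, in particular the true one.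
  By Cauchy--Schwarz in the metric \<open>P = A\<^sub>i\<^sup>-\<^sup>1\<^sup>/\<^sup>2\<close> this gives
  \<open>\<nabla>h \<bullet> f \<le> \<nabla>h \<bullet> \<zeta>\<^sup>T y + |\<nabla>h| |P y|\<close> along the closed loop, and the
  Schur complement of \<open>H(x) \<preceq> 0\<close> together with AM--GM bounds the right-hand side by
  \<open>-\<l> h - \<epsilon>\<close>. Hence \<open>h\<close> strictly decreases along solutions at every point of
  \<open>{h = 0}\<close>, so no solution can leave \<open>{h \<le> 0}\<close>.
\<close>

section \<open>Symmetric matrices and the positive semidefinite square root\<close>

lemma symmetric_mat_inner:
  fixes M :: "real^'k^'k"
  assumes "symmetric_mat M"
  shows "(M *v x) \<bullet> y = x \<bullet> (M *v y)"
  using assms dot_lmul_matrix[of x M y] unfolding symmetric_mat_def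
  by (metis transpose_matrix_vector)

lemma symmetric_matI:
  fixes M :: "real^'k^'k"
  assumes "\<And>x y. (M *v x) \<bullet> y = x \<bullet> (M *v y)"
  shows "symmetric_mat M"
  unfolding symmetric_mat_def matrix_eq
proof
  fix x
  have "(x v* M) \<bullet> y = (M *v x) \<bullet> y" for y using assms dot_lmul_matrix by metis
  then have "(x v* M - M *v x) \<bullet> (x v* M - M *v x) = 0" by (simp add: inner_diff_left)
  then show "transpose M *v x = M *v x" by simp
qed

lemma inner_transpose_mult_vec: "x \<bullet> (transpose (A::real^'c^'r) *v y) = (A *v x) \<bullet> y"
  by (metis dot_lmul_matrix inner_commute transpose_matrix_vector)

lemma outer_mult_vec: "outer a b *v x = (b \<bullet> x) *\<^sub>R a"
  by (simp add: outer_def matrix_vector_mult_def vec_eq_iff inner_vec_def sum_distrib_left mult_ac)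

lemma transpose_outer: "transpose (outer a b) = outer b a"
  by (simp add: outer_def transpose_def vec_eq_iff)

lemma sum_mult_vec: "(\<Sum>j\<in>S. f j) *v (x::real^'c) = (\<Sum>j\<in>S. f j *v x)"
  by (induction S rule: infinite_finite_induct) (auto simp: matrix_vector_mult_add_rdistrib)

lemma mult_vec_sum: "(A::real^'c^'r) *v (\<Sum>j\<in>S. f j) = (\<Sum>j\<in>S. A *v f j)"
  by (induction S rule: infinite_finite_induct) (auto simp: matrix_vector_right_distrib)

lemma scaleR_mult_vec: "(c *\<^sub>R A) *v (x::real^'c) = c *\<^sub>R (A *v x)"
  by (simp add: matrix_vector_mult_def vec_eq_iff sum_distrib_left mult_ac)

lemma uminus_mult_vec: "(- A) *v (x::real^'c) = - (A *v x)"
  by (simp add: matrix_vector_mult_def vec_eq_iff sum_negf)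

lemma mult_vec_uminus: "(A::real^'c^'r) *v (- x) = - (A *v x)"
  by (simp add: matrix_vector_mult_def vec_eq_iff sum_negf)

lemma transpose_uminus: "transpose (- (A::real^'c^'r)) = - transpose A"
  by (simp add: transpose_def vec_eq_iff)

lemma pd_invertible:
  fixes A :: "real^'k^'k"
  assumes "pd A"
  shows "invertible A"
proof -
  have "x = 0" if "A *v x = 0" for x
    using assms that unfolding pd_def by (metis inner_zero_right less_irrefl)
  then show ?thesis
    by (meson invertible_left_inverse matrix_left_invertible_ker)
qed

lemma matrix_inv_inverse:
  fixes A :: "real^'k^'k"
  assumes "invertible A"
  shows "A ** matrix_inv A = mat 1" and "matrix_inv A ** A = mat 1"
proof -
  have "A ** matrix_inv A = mat 1 \<and> matrix_inv A ** A = mat 1"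
    using assms unfolding matrix_inv_def invertible_def by (rule someI_ex)
  then show "A ** matrix_inv A = mat 1" and "matrix_inv A ** A = mat 1" by auto
qed

lemma matrix_inv_symmetric_psd:
  fixes A :: "real^'k^'k"
  assumes sym: "symmetric_mat A" and pd: "pd A"
  shows "symmetric_mat (matrix_inv A)" and "psd (matrix_inv A)"
proof -
  have AA: "A *v (matrix_inv A *v y) = y" for y
    using matrix_inv_inverse(1)[OF pd_invertible[OF pd]] by (simp add: matrix_vector_mul_assoc)
  show "symmetric_mat (matrix_inv A)"
  proof (rule symmetric_matI)
    fix x y
    have "(matrix_inv A *v x) \<bullet> y = (matrix_inv A *v x) \<bullet> (A *v (matrix_inv A *v y))"
      by (simp add: AA)
    also have "\<dots> = (A *v (matrix_inv A *v x)) \<bullet> (matrix_inv A *v y)"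
      by (rule symmetric_mat_inner[OF sym, symmetric])
    also have "\<dots> = x \<bullet> (matrix_inv A *v y)"
      by (simp add: AA)
    finally show "(matrix_inv A *v x) \<bullet> y = x \<bullet> (matrix_inv A *v y)" .
  qed
  show "psd (matrix_inv A)"
    unfolding psd_def
  proof
    fix v
    have "v \<bullet> (matrix_inv A *v v) = (matrix_inv A *v v) \<bullet> (A *v (matrix_inv A *v v))"
      by (simp add: AA inner_commute)
    also have "\<dots> \<ge> 0"
      using pd unfolding pd_def by (cases "matrix_inv A *v v = 0") (auto intro: less_imp_le)
    finally show "v \<bullet> (matrix_inv A *v v) \<ge> 0" .
  qed
qed

lemma linear_coeff_zero_if_quadratic_nonpos:
  fixes a c :: real
  assumes "\<And>t. 2*t*a + t\<^sup>2*c \<le> 0"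
  shows "a = 0"
proof -
  define C where "C = \<bar>c\<bar> + 1"
  have C: "C > 0" "2*C + c > 0" unfolding C_def by auto
  have "(2*(a/C)*a + (a/C)\<^sup>2*c) * C\<^sup>2 \<le> 0"
    using assms[of "a/C"] by (rule mult_nonpos_nonneg) simp
  moreover have "(2*(a/C)*a + (a/C)\<^sup>2*c) * C\<^sup>2 = a\<^sup>2 * (2*C + c)"
    using C by (simp add: field_simps power2_eq_square)
  ultimately have "a\<^sup>2 * (2*C + c) \<le> 0" by simp
  then have "a\<^sup>2 \<le> 0" using C by (simp add: mult_le_0_iff)
  then show ?thesis by simp
qed

lemma quadratic_form_maximiser_eigenvector:
  fixes M :: "real^'k^'k"
  assumes sym: "symmetric_mat M" and S: "subspace S" and MS: "\<And>w. w \<in> S \<Longrightarrow> M *v w \<in> S"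
    and vS: "v \<in> S" and v1: "norm v = 1"
    and vmax: "\<And>w. w \<in> S \<Longrightarrow> norm w = 1 \<Longrightarrow> w \<bullet> (M *v w) \<le> v \<bullet> (M *v v)"
  shows "M *v v = (v \<bullet> (M *v v)) *\<^sub>R v"
proof -
  define l where "l = v \<bullet> (M *v v)"
  have vv: "v \<bullet> v = 1" using v1 by (simp add: dot_square_norm)
  have lagrange: "w \<bullet> (M *v v) = 0" if wS: "w \<in> S" and wv: "v \<bullet> w = 0" for w
  proof (rule linear_coeff_zero_if_quadratic_nonpos[where c = "w \<bullet> (M *v w) - l * (w \<bullet> w)"])
    fix t :: real
    define u where "u = v + t *\<^sub>R w"
    have uS: "u \<in> S" using S vS wS by (simp add: u_def subspace_add subspace_scale)
    have uu: "u \<bullet> u = 1 + t\<^sup>2 * (w \<bullet> w)"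
      using vv wv by (simp add: u_def inner_add_left inner_add_right inner_commute power2_eq_square)
    then have upos: "u \<bullet> u > 0" by (simp add: add_pos_nonneg)
    then have "(u /\<^sub>R norm u) \<bullet> (M *v (u /\<^sub>R norm u)) \<le> l"
      using vmax[of "u /\<^sub>R norm u"] S uS by (simp add: l_def subspace_scale)
    moreover have "(u /\<^sub>R norm u) \<bullet> (M *v (u /\<^sub>R norm u)) = (u \<bullet> (M *v u)) / (u \<bullet> u)"
      by (simp add: matrix_vector_mult_scaleR dot_square_norm power2_eq_square divide_inverse
          inverse_mult_distrib mult_ac)
    ultimately have "u \<bullet> (M *v u) \<le> l * (u \<bullet> u)" using upos by (simp add: divide_le_eq)
    moreover have "u \<bullet> (M *v u) = l + 2*t*(w \<bullet> (M *v v)) + t\<^sup>2 * (w \<bullet> (M *v w))"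
      using symmetric_mat_inner[OF sym, of v w]
      by (simp add: u_def l_def matrix_vector_right_distrib matrix_vector_mult_scaleR
          inner_add_left inner_add_right inner_commute power2_eq_square algebra_simps)
    ultimately show "2*t*(w \<bullet> (M *v v)) + t\<^sup>2 * (w \<bullet> (M *v w) - l * (w \<bullet> w)) \<le> 0"
      unfolding uu by (simp add: algebra_simps)
  qed
  define e where "e = M *v v - l *\<^sub>R v"
  have "e \<in> S" using S MS vS by (simp add: e_def subspace_diff subspace_scale)
  moreover have ve: "v \<bullet> e = 0" using vv by (simp add: e_def l_def inner_diff_right)
  ultimately have "e \<bullet> (M *v v) = 0" using lagrange by blast
  moreover have "e \<bullet> (M *v v) = e \<bullet> e + l * (e \<bullet> v)"
    by (simp add: e_def inner_diff_right inner_diff_left algebra_simps)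
  ultimately have "e = 0" using ve by (simp add: inner_commute)
  then show ?thesis by (simp add: e_def l_def)
qed

lemma symmetric_mat_eigenvector_orthogonal:
  fixes M :: "real^'k^'k"
  assumes sym: "symmetric_mat M" and eig: "\<And>b. b \<in> B \<Longrightarrow> \<exists>c. M *v b = c *\<^sub>R b"
    and "x \<noteq> 0" and xB: "\<And>b. b \<in> B \<Longrightarrow> b \<bullet> x = 0"
  obtains v where "norm v = 1" "\<And>b. b \<in> B \<Longrightarrow> b \<bullet> v = 0" "M *v v = (v \<bullet> (M *v v)) *\<^sub>R v"
proof -
  define S where "S = {w. \<forall>b\<in>B. b \<bullet> w = 0}"
  have S: "subspace S" by (auto simp: S_def subspace_def inner_add_right)
  have MS: "M *v w \<in> S" if "w \<in> S" for w
  proof -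
    have "b \<bullet> (M *v w) = 0" if "b \<in> B" for b
      using eig[OF that] \<open>w \<in> S\<close> that symmetric_mat_inner[OF sym, of b w] by (auto simp: S_def)
    then show ?thesis by (simp add: S_def)
  qed
  have "compact (S \<inter> sphere 0 1)"
    by (simp add: S closed_Int_compact closed_subspace)
  moreover have "x /\<^sub>R norm x \<in> S \<inter> sphere 0 1"
    using \<open>x \<noteq> 0\<close> xB by (simp add: S_def)
  ultimately obtain v where v: "v \<in> S \<inter> sphere 0 1"
    and vmax: "\<And>w. w \<in> S \<inter> sphere 0 1 \<Longrightarrow> w \<bullet> (M *v w) \<le> v \<bullet> (M *v v)"
    using continuous_attains_sup[of "S \<inter> sphere 0 1" "\<lambda>w. w \<bullet> (M *v w)"]
    by (fastforce intro: continuous_intros linear_continuous_on matrix_vector_mul_bounded_linear)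
  have "M *v v = (v \<bullet> (M *v v)) *\<^sub>R v"
    using v vmax by (intro quadratic_form_maximiser_eigenvector[OF sym S MS]) auto
  then show ?thesis using v by (intro that) (auto simp: S_def)
qed

lemma inner_sum_orthonormal:
  fixes B :: "(real^'k) set"
  assumes "finite B" "pairwise orthogonal B" "\<And>b. b \<in> B \<Longrightarrow> norm b = 1" "c \<in> B"
  shows "c \<bullet> (\<Sum>b\<in>B. \<alpha> b *\<^sub>R b) = \<alpha> c"
proof -
  have "c \<bullet> (\<Sum>b\<in>B. \<alpha> b *\<^sub>R b) = (\<Sum>b\<in>B. if b = c then \<alpha> b else 0)"
    unfolding inner_sum_right
    using assms by (intro sum.cong) (auto simp: pairwise_def orthogonal_def inner_commute dot_square_norm)
  then show ?thesis using assms by simp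
qed

lemma symmetric_mat_orthonormal_eigenbasis:
  fixes M :: "real^'k^'k"
  assumes sym: "symmetric_mat M"
  obtains B where "finite B" "pairwise orthogonal B" "\<And>b. b \<in> B \<Longrightarrow> norm b = 1"
    "\<And>b. b \<in> B \<Longrightarrow> M *v b = (b \<bullet> (M *v b)) *\<^sub>R b" "\<And>x. x = (\<Sum>b\<in>B. (b \<bullet> x) *\<^sub>R b)"
proof -
  define eigen_system where "eigen_system B \<longleftrightarrow> finite B \<and> pairwise orthogonal B
      \<and> (\<forall>b\<in>B. norm b = 1 \<and> M *v b = (b \<bullet> (M *v b)) *\<^sub>R b)" for B :: "(real^'k) set"
  have "card B < DIM(real^'k) + 1" if "eigen_system B" for B
  proof -
    have "independent B"
      using that by (intro pairwise_orthogonal_independent) (auto simp: eigen_system_def)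
    then show ?thesis using independent_bound by fastforce
  qed
  moreover have "eigen_system {}" by (simp add: eigen_system_def)
  ultimately obtain B where B: "eigen_system B" and Bmax: "\<And>C. eigen_system C \<Longrightarrow> card C \<le> card B"
    using ex_has_greatest_nat[of eigen_system "{}" card] by blast
  then have fin: "finite B" and orth: "pairwise orthogonal B" and unit: "\<And>b. b \<in> B \<Longrightarrow> norm b = 1"
    and eig: "\<And>b. b \<in> B \<Longrightarrow> M *v b = (b \<bullet> (M *v b)) *\<^sub>R b"
    by (auto simp: eigen_system_def)
  have "x = (\<Sum>b\<in>B. (b \<bullet> x) *\<^sub>R b)" for x
  proof (rule ccontr)
    define e where "e = x - (\<Sum>b\<in>B. (b \<bullet> x) *\<^sub>R b)"
    assume "x \<noteq> (\<Sum>b\<in>B. (b \<bullet> x) *\<^sub>R b)"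
    then have "e \<noteq> 0" by (simp add: e_def)
    moreover have "b \<bullet> e = 0" if "b \<in> B" for b
      using inner_sum_orthonormal[OF fin orth unit that] by (simp add: e_def inner_diff_right)
    ultimately obtain v where v: "norm v = 1" "\<And>b. b \<in> B \<Longrightarrow> b \<bullet> v = 0"
      "M *v v = (v \<bullet> (M *v v)) *\<^sub>R v"
      using symmetric_mat_eigenvector_orthogonal[OF sym, of B e] eig by blast
    then have "v \<notin> B" by (metis norm_eq_sqrt_inner real_sqrt_zero zero_neq_one)
    moreover have "eigen_system (insert v B)"
      using B v \<open>v \<notin> B\<close> by (auto simp: eigen_system_def pairwise_insert orthogonal_def inner_commute)
    ultimately show False using Bmax[of "insert v B"] fin by simp
  qed
  then show ?thesis using that fin orth unit eig by blast
qed

lemma psd_square_root_on_eigenvector: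
  fixes R :: "real^'k^'k"
  assumes sym: "symmetric_mat R" and psd: "psd R" and eig: "(R ** R) *v b = \<mu> *\<^sub>R b" and "\<mu> \<ge> 0"
  shows "R *v b = sqrt \<mu> *\<^sub>R b"
proof -
  define e where "e = R *v b - sqrt \<mu> *\<^sub>R b"
  have "R *v e = - sqrt \<mu> *\<^sub>R e"
    using eig \<open>\<mu> \<ge> 0\<close> by (simp add: e_def matrix_vector_mul_assoc matrix_vector_mult_diff_distrib
        matrix_vector_mult_scaleR algebra_simps)
  then have "sqrt \<mu> * (e \<bullet> e) = - (e \<bullet> (R *v e))" by simp
  also have "\<dots> \<le> 0" using psd by (simp add: psd_def)
  finally have "sqrt \<mu> * (e \<bullet> e) \<le> 0" .
  show ?thesis
  proof (cases "\<mu> = 0")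
    case True
    then have "(R *v b) \<bullet> (R *v b) = 0"
      using eig symmetric_mat_inner[OF sym, of b "R *v b"] by (simp add: matrix_vector_mul_assoc)
    then show ?thesis using True by simp
  next
    case False
    with \<open>\<mu> \<ge> 0\<close> \<open>sqrt \<mu> * (e \<bullet> e) \<le> 0\<close> have "e \<bullet> e \<le> 0"
      by (simp add: mult_le_0_iff)
    then have "e = 0" by (metis inner_ge_zero inner_eq_zero_iff order_antisym)
    then show ?thesis by (simp add: e_def)
  qed
qed

lemma psd_square_root_unique:
  fixes M :: "real^'k^'k"
  assumes "symmetric_mat M" "psd M"
  shows "\<exists>!S. symmetric_mat S \<and> psd S \<and> S ** S = M"
proof -
  obtain B where fin: "finite B" and orth: "pairwise orthogonal B" and unit: "\<And>b. b \<in> B \<Longrightarrow> norm b = 1"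
    and eig: "\<And>b. b \<in> B \<Longrightarrow> M *v b = (b \<bullet> (M *v b)) *\<^sub>R b"
    and expand: "\<And>x. x = (\<Sum>b\<in>B. (b \<bullet> x) *\<^sub>R b)"
    using symmetric_mat_orthonormal_eigenbasis[OF assms(1)] by blast
  define \<mu> where "\<mu> b = b \<bullet> (M *v b)" for b
  have \<mu>_nonneg: "\<mu> b \<ge> 0" for b using \<open>psd M\<close> by (simp add: psd_def \<mu>_def)
  define S where "S = (\<Sum>b\<in>B. sqrt (\<mu> b) *\<^sub>R outer b b)"
  have root_mult_vec: "R *v x = (\<Sum>b\<in>B. (sqrt (\<mu> b) * (b \<bullet> x)) *\<^sub>R b)"
    if "symmetric_mat R" "psd R" "R ** R = M" for R x
  proof -
    have "R *v x = (\<Sum>b\<in>B. (b \<bullet> x) *\<^sub>R (R *v b))"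
      by (subst expand) (simp add: mult_vec_sum matrix_vector_mult_scaleR)
    also have "\<dots> = (\<Sum>b\<in>B. (sqrt (\<mu> b) * (b \<bullet> x)) *\<^sub>R b)"
    proof (rule sum.cong[OF refl])
      fix b assume "b \<in> B"
      then have "R *v b = sqrt (\<mu> b) *\<^sub>R b"
        using that eig \<mu>_nonneg by (intro psd_square_root_on_eigenvector) (simp_all add: \<mu>_def)
      then show "(b \<bullet> x) *\<^sub>R (R *v b) = (sqrt (\<mu> b) * (b \<bullet> x)) *\<^sub>R b" by simp
    qed
    finally show ?thesis .
  qed
  have S_mult_vec: "S *v x = (\<Sum>b\<in>B. (sqrt (\<mu> b) * (b \<bullet> x)) *\<^sub>R b)" for x
    by (simp add: S_def sum_mult_vec scaleR_mult_vec outer_mult_vec)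
  have "symmetric_mat S"
    by (rule symmetric_matI) (simp add: S_mult_vec inner_sum_left inner_sum_right inner_commute mult_ac)
  moreover have "psd S"
    unfolding psd_def
    by (simp add: S_mult_vec inner_sum_right inner_commute \<mu>_nonneg sum_nonneg mult.assoc)
  moreover have "S ** S = M"
    unfolding matrix_eq
  proof
    fix x
    have "(S ** S) *v x = S *v (S *v x)" by (simp add: matrix_vector_mul_assoc)
    also have "\<dots> = (\<Sum>b\<in>B. (sqrt (\<mu> b) * (b \<bullet> (S *v x))) *\<^sub>R b)"
      by (rule S_mult_vec)
    also have "\<dots> = (\<Sum>b\<in>B. (\<mu> b * (b \<bullet> x)) *\<^sub>R b)"
      using \<mu>_nonneg
      by (intro sum.cong) (simp_all add: S_mult_vec inner_sum_orthonormal[OF fin orth unit]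
          mult.assoc[symmetric])
    also have "\<dots> = (\<Sum>b\<in>B. (b \<bullet> x) *\<^sub>R (M *v b))"
      unfolding \<mu>_def by (rule sum.cong[OF refl]) (metis eig scaleR_scaleR mult.commute)
    also have "\<dots> = M *v x"
      by (subst (2) expand) (simp add: mult_vec_sum matrix_vector_mult_scaleR)
    finally show "(S ** S) *v x = M *v x" .
  qed
  moreover have "R = S" if "symmetric_mat R" "psd R" "R ** R = M" for R
    using root_mult_vec[OF that] S_mult_vec by (simp add: matrix_eq)
  ultimately show ?thesis by blast
qed

lemma psd_sqrt:
  fixes M :: "real^'k^'k"
  assumes "symmetric_mat M" "psd M"
  shows "symmetric_mat (psd_sqrt M)" and "psd (psd_sqrt M)" and "psd_sqrt M ** psd_sqrt M = M"
  using theI'[OF psd_square_root_unique[OF assms]] unfolding psd_sqrt_def by auto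

lemma psd_sqrt_mat_1: "psd_sqrt (mat 1 :: real^'k^'k) = mat 1"
proof -
  have sym: "symmetric_mat (mat 1 :: real^'k^'k)" and psd: "psd (mat 1 :: real^'k^'k)"
    by (simp_all add: symmetric_mat_def psd_def)
  show ?thesis
    unfolding psd_sqrt_def using psd_square_root_unique[OF sym psd]
    by (rule the1_equality) (simp add: sym psd)
qed

section \<open>Block matrices and the data-consistent ellipsoid\<close>

lemma sum_UNIV_Plus:
  "(\<Sum>i\<in>UNIV. g i) = (\<Sum>i\<in>UNIV. g (Inl i)) + (\<Sum>i\<in>UNIV. g (Inr i))"
  for g :: "'a::finite + 'b::finite \<Rightarrow> 'c::comm_monoid_add"
proof -
  have "sum g (UNIV <+> UNIV) = sum (g \<circ> Inl) UNIV + sum (g \<circ> Inr) UNIV" by (rule sum.Plus) auto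
  then show ?thesis by simp
qed

lemma inner_vconcat: "vconcat a b \<bullet> vconcat c d = a \<bullet> c + b \<bullet> d"
  by (simp add: inner_vec_def sum_UNIV_Plus vconcat_def)

lemma block3_mult_vconcat:
  "block3 M11 M12 M13 M21 M22 M23 M31 M32 M33 *v vconcat a (vconcat b c) =
   vconcat (M11 *v a + M12 *v b + M13 *v c)
     (vconcat (M21 *v a + M22 *v b + M23 *v c) (M31 *v a + M32 *v b + M33 *v c))"
  by (auto simp: vec_eq_iff block3_def vconcat_def matrix_vector_mult_def sum_UNIV_Plus split: sum.split)

lemma block3_quadratic_form:
  "vconcat a (vconcat b c) \<bullet> (block3 M11 M12 M13 M21 M22 M23 M31 M32 M33 *v vconcat a (vconcat b c))
   = a \<bullet> (M11 *v a) + a \<bullet> (M12 *v b) + a \<bullet> (M13 *v c) + b \<bullet> (M21 *v a) + b \<bullet> (M22 *v b)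
     + b \<bullet> (M23 *v c) + c \<bullet> (M31 *v a) + c \<bullet> (M32 *v b) + c \<bullet> (M33 *v c)"
  by (simp add: block3_mult_vconcat inner_vconcat inner_add_right)

definition hconcat :: "real^'a^'r \<Rightarrow> real^'b^'r \<Rightarrow> real^('a + 'b)^'r" where
  "hconcat A B = (\<chi> i k. case k of Inl a \<Rightarrow> A $ i $ a | Inr b \<Rightarrow> B $ i $ b)"

lemma hconcat_mult_vconcat: "hconcat A B *v vconcat p q = A *v p + B *v q"
  by (simp add: vec_eq_iff matrix_vector_mult_def hconcat_def vconcat_def sum_UNIV_Plus)

definition data_LMI ::
  "real^'p^'p \<Rightarrow> real^'n^'p \<Rightarrow> (nat \<Rightarrow> real) \<Rightarrow> real \<Rightarrow> nat \<Rightarrow> (nat \<Rightarrow> real^'p) \<Rightarrow> (nat \<Rightarrow> real^'n)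
   \<Rightarrow> real^('n + ('p + 'p))^('n + ('p + 'p))" where
  "data_LMI Ai Bi \<tau> \<omega> T w xd = block3
     (- mat 1 - (\<Sum>j<T. \<tau> j *\<^sub>R (- \<omega> *\<^sub>R mat 1 + outer (xd j) (xd j))))
     (transpose Bi - (\<Sum>j<T. \<tau> j *\<^sub>R transpose (- outer (w j) (xd j))))
     (transpose Bi)
     (Bi - (\<Sum>j<T. \<tau> j *\<^sub>R (- outer (w j) (xd j))))
     (Ai - (\<Sum>j<T. \<tau> j *\<^sub>R outer (w j) (w j)))
     0
     Bi
     0
     (- Ai)"

lemma data_LMI_quadratic_form:
  fixes Ai :: "real^'p^'p" and Bi :: "real^'n^'p"
  shows "vconcat x (vconcat b c) \<bullet> (data_LMI Ai Bi \<tau> \<omega> T w xd *v vconcat x (vconcat b c)) =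
     - (x \<bullet> x) + 2 * ((Bi *v x) \<bullet> (b + c)) + b \<bullet> (Ai *v b) - c \<bullet> (Ai *v c)
     + (\<Sum>j<T. \<tau> j * (\<omega> * (x \<bullet> x) - (xd j \<bullet> x - w j \<bullet> b)\<^sup>2))"
proof -
  define p where "p j = xd j \<bullet> x" for j
  define q where "q j = w j \<bullet> b" for j
  have "x \<bullet> ((- mat 1 - (\<Sum>j<T. \<tau> j *\<^sub>R (- \<omega> *\<^sub>R mat 1 + outer (xd j) (xd j)))) *v x)
      = - (x \<bullet> x) - (\<Sum>j<T. \<tau> j * (- \<omega> * (x \<bullet> x) + (p j)\<^sup>2))"
    by (simp add: matrix_vector_mult_diff_rdistrib uminus_mult_vec sum_mult_vec scaleR_mult_vec
        matrix_vector_mult_add_rdistrib outer_mult_vec inner_diff_right inner_sum_right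
        inner_add_right p_def power2_eq_square inner_commute)
  moreover have "x \<bullet> ((transpose Bi - (\<Sum>j<T. \<tau> j *\<^sub>R transpose (- outer (w j) (xd j)))) *v b)
      = (Bi *v x) \<bullet> b + (\<Sum>j<T. \<tau> j * (p j * q j))"
    by (simp add: matrix_vector_mult_diff_rdistrib inner_transpose_mult_vec sum_mult_vec
        scaleR_mult_vec transpose_outer outer_mult_vec inner_diff_right inner_sum_right p_def q_def
        inner_commute sum_negf transpose_uminus uminus_mult_vec mult_ac
        matrix_vector_mult_add_rdistrib inner_add_right
        del: transpose_matrix_vector)
  moreover have "b \<bullet> ((Bi - (\<Sum>j<T. \<tau> j *\<^sub>R (- outer (w j) (xd j)))) *v x)
      = (Bi *v x) \<bullet> b + (\<Sum>j<T. \<tau> j * (p j * q j))"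
    by (simp add: matrix_vector_mult_diff_rdistrib sum_mult_vec scaleR_mult_vec uminus_mult_vec
        outer_mult_vec inner_diff_right inner_sum_right p_def q_def inner_commute sum_negf mult_ac
        matrix_vector_mult_add_rdistrib inner_add_right)
  moreover have "b \<bullet> ((Ai - (\<Sum>j<T. \<tau> j *\<^sub>R outer (w j) (w j))) *v b)
      = b \<bullet> (Ai *v b) - (\<Sum>j<T. \<tau> j * (q j)\<^sup>2)"
    by (simp add: matrix_vector_mult_diff_rdistrib sum_mult_vec scaleR_mult_vec
        outer_mult_vec inner_diff_right inner_sum_right q_def inner_commute power2_eq_square mult_ac)
  moreover have "x \<bullet> (transpose Bi *v c) = (Bi *v x) \<bullet> c"
    by (rule inner_transpose_mult_vec)
  moreover have "(\<Sum>j<T. \<tau> j * (\<omega> * (x \<bullet> x) - (p j - q j)\<^sup>2))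
     = - (\<Sum>j<T. \<tau> j * (- \<omega> * (x \<bullet> x) + (p j)\<^sup>2)) + 2 * (\<Sum>j<T. \<tau> j * (p j * q j))
       - (\<Sum>j<T. \<tau> j * (q j)\<^sup>2)"
    by (simp add: sum_distrib_left sum_subtractf sum.distrib power2_eq_square algebra_simps
        flip: sum_negf)
  ultimately show ?thesis
    unfolding data_LMI_def block3_quadratic_form
    by (simp add: uminus_mult_vec inner_add_right inner_commute p_def q_def del: transpose_matrix_vector)
qed

lemma data_consistent_matrix_in_ellipsoid:
  fixes Ai :: "real^'p^'p" and Bi \<zeta> :: "real^'n^'p" and Ms :: "real^'p^'n"
  assumes sym: "symmetric_mat Ai" and LMI: "nsd (data_LMI Ai Bi \<tau> \<omega> T w xd)"
    and \<tau>: "\<forall>j<T. \<tau> j \<ge> 0" and consistent: "\<forall>j<T. (norm (xd j - Ms *v w j))\<^sup>2 \<le> \<omega>"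
    and \<zeta>: "Ai ** \<zeta> = - Bi"
  shows "(transpose Ms *v x - \<zeta> *v x) \<bullet> (Ai *v (transpose Ms *v x - \<zeta> *v x)) \<le> x \<bullet> x"
proof -
  define b where "b = transpose Ms *v x"
  define c where "c = - (\<zeta> *v x)"
  have Bi: "Bi *v x = Ai *v c"
    using arg_cong[OF \<zeta>, of "\<lambda>A. A *v x"] by (simp add: c_def matrix_vector_mul_assoc mult_vec_uminus uminus_mult_vec)
  have "\<omega> * (x \<bullet> x) - (xd j \<bullet> x - w j \<bullet> b)\<^sup>2 \<ge> 0" if "j < T" for j
  proof -
    have "w j \<bullet> b = (Ms *v w j) \<bullet> x"
      unfolding b_def by (simp add: inner_transpose_mult_vec inner_commute del: transpose_matrix_vector)
    then have "(xd j \<bullet> x - w j \<bullet> b)\<^sup>2 = ((xd j - Ms *v w j) \<bullet> x)\<^sup>2" by (simp add: inner_diff_left)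
    also have "\<dots> \<le> (norm (xd j - Ms *v w j))\<^sup>2 * (x \<bullet> x)"
      using power_mono[OF Cauchy_Schwarz_ineq2[of "xd j - Ms *v w j" x], of 2]
      by (simp add: power_mult_distrib dot_square_norm)
    also have "\<dots> \<le> \<omega> * (x \<bullet> x)" using consistent that by (intro mult_right_mono) auto
    finally show ?thesis by simp
  qed
  then have "(\<Sum>j<T. \<tau> j * (\<omega> * (x \<bullet> x) - (xd j \<bullet> x - w j \<bullet> b)\<^sup>2)) \<ge> 0"
    using \<tau> by (intro sum_nonneg) simp
  moreover have "vconcat x (vconcat b c) \<bullet> (data_LMI Ai Bi \<tau> \<omega> T w xd *v vconcat x (vconcat b c)) \<le> 0"
    using LMI by (simp add: nsd_def)
  moreover have "(b + c) \<bullet> (Ai *v (b + c)) = b \<bullet> (Ai *v b) + 2 * ((Ai *v c) \<bullet> b) + c \<bullet> (Ai *v c)"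
    using symmetric_mat_inner[OF sym, of c b]
    by (simp add: matrix_vector_right_distrib inner_add_left inner_add_right inner_commute)
  ultimately have "(b + c) \<bullet> (Ai *v (b + c)) \<le> x \<bullet> x"
    unfolding data_LMI_quadratic_form Bi by (simp add: inner_add_right inner_commute)
  then show ?thesis by (simp add: b_def c_def)
qed

lemma ellipsoid_inner_bound:
  fixes Ai P :: "real^'p^'p" and \<zeta> :: "real^'n^'p" and Ms :: "real^'p^'n"
  assumes P: "symmetric_mat P" "P ** P ** Ai = mat 1"
    and ellipsoid: "(transpose Ms *v g - \<zeta> *v g) \<bullet> (Ai *v (transpose Ms *v g - \<zeta> *v g)) \<le> g \<bullet> g"
  shows "g \<bullet> (Ms *v y) \<le> g \<bullet> (transpose \<zeta> *v y) + norm g * norm (P *v y)"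
proof -
  define u where "u = transpose Ms *v g - \<zeta> *v g"
  have PPA: "P *v (P *v (Ai *v u)) = u"
    using P(2) by (simp add: matrix_vector_mul_assoc matrix_mul_assoc)
  have "g \<bullet> (Ms *v y) = u \<bullet> y + g \<bullet> (transpose \<zeta> *v y)"
    unfolding u_def by (simp add: inner_diff_left inner_diff_right inner_transpose_mult_vec inner_commute
        del: transpose_matrix_vector)
  moreover have "u \<bullet> y = (P *v (Ai *v u)) \<bullet> (P *v y)"
    using symmetric_mat_inner[OF P(1), of "P *v (Ai *v u)" y] PPA by simp
  moreover have "(norm (P *v (Ai *v u)))\<^sup>2 \<le> (norm g)\<^sup>2"
  proof -
    have "(norm (P *v (Ai *v u)))\<^sup>2 = (Ai *v u) \<bullet> (P *v (P *v (Ai *v u)))"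
      using symmetric_mat_inner[OF P(1), of "Ai *v u" "P *v (Ai *v u)"] by (simp add: power2_norm_eq_inner)
    also have "\<dots> = u \<bullet> (Ai *v u)" by (simp add: PPA inner_commute)
    also have "\<dots> \<le> (norm g)\<^sup>2" using ellipsoid by (simp add: u_def power2_norm_eq_inner)
    finally show ?thesis .
  qed
  then have "(P *v (Ai *v u)) \<bullet> (P *v y) \<le> norm g * norm (P *v y)"
    by (meson norm_cauchy_schwarz norm_ge_zero mult_right_mono power2_le_imp_le order_trans)
  ultimately show ?thesis by linarith
qed

lemma arrow_block3_nsd:
  fixes r :: "real^'p" and s :: "real^'q"
  assumes "\<eta> > 0"
    and "nsd (block3 ((\<chi> _ _. a) :: real^unit^unit) (transpose (col r)) (transpose (col s))
           (col r) ((- 2 * \<eta>) *\<^sub>R mat 1) 0 (col s) 0 ((- 2 * \<eta>) *\<^sub>R mat 1))"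
  shows "a + norm r * norm s / \<eta> \<le> 0"
proof -
  have col: "col r *v e = (e $ ()) *\<^sub>R r" for e :: "real^unit" and r :: "real^'k"
    by (simp add: col_def matrix_vector_mult_def vec_eq_iff UNIV_unit mult.commute)
  have transpose_col: "transpose (col r) *v x = (\<chi> _. r \<bullet> x)" for r x :: "real^'k"
    by (simp add: col_def transpose_def matrix_vector_mult_def vec_eq_iff inner_vec_def)
  have unit: "(\<chi> _ _. a) *v e = (\<chi> _. a * e $ ())" "e \<bullet> f = e $ () * f $ ()" for e f :: "real^unit"
    by (simp_all add: matrix_vector_mult_def vec_eq_iff inner_vec_def UNIV_unit)
  \<comment> \<open>the maximiser of the quadratic form in the last two blocks (Schur complement)\<close>
  let ?e = "vconcat (\<chi> _. 1) (vconcat ((1 / (2 * \<eta>)) *\<^sub>R r) ((1 / (2 * \<eta>)) *\<^sub>R s))"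
  have "?e \<bullet> (block3 ((\<chi> _ _. a) :: real^unit^unit) (transpose (col r)) (transpose (col s))
           (col r) ((- 2 * \<eta>) *\<^sub>R mat 1) 0 (col s) 0 ((- 2 * \<eta>) *\<^sub>R mat 1) *v ?e) \<le> 0"
    using assms(2) by (simp add: nsd_def)
  then have "4 * \<eta>\<^sup>2 * (2 * \<eta> * a + r \<bullet> r + s \<bullet> s) \<le> 0"
    using \<open>\<eta> > 0\<close> unfolding block3_quadratic_form
    by (simp add: col transpose_col unit uminus_mult_vec scaleR_mult_vec matrix_vector_mult_scaleR
        field_simps power2_eq_square del: transpose_matrix_vector)
  then have "2 * \<eta> * a + (norm r)\<^sup>2 + (norm s)\<^sup>2 \<le> 0"
    using \<open>\<eta> > 0\<close> by (simp add: mult_le_0_iff dot_square_norm)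
  then show ?thesis
    using \<open>\<eta> > 0\<close> sum_squares_bound[of "norm r" "norm s"] by (simp add: field_simps)
qed

section \<open>Invariance of sublevel sets\<close>

lemma poly_fun_differentiable: "poly_fun f \<Longrightarrow> f differentiable (at x)"
  by (induction rule: poly_fun.induct)
     (auto intro!: differentiable_add differentiable_mult bounded_linear_imp_differentiable
       bounded_linear_vec_nth)

lemma frechet_derivative_eq_inner_grad:
  fixes f :: "real^'n \<Rightarrow> real"
  assumes "f differentiable (at x)"
  shows "frechet_derivative f (at x) v = grad f x \<bullet> v"
proof -
  have lin: "linear (frechet_derivative f (at x))"
    using assms frechet_derivative_works has_derivative_linear by blast
  have "frechet_derivative f (at x) v = frechet_derivative f (at x) (\<Sum>i\<in>UNIV. v $ i *\<^sub>R axis i 1)"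
    using basis_expansion[of v] by (simp add: scalar_mult_eq_scaleR)
  also have "\<dots> = grad f x \<bullet> v"
    by (simp add: linear_sum[OF lin] linear_scale[OF lin] grad_def inner_vec_def mult.commute)
  finally show ?thesis .
qed

lemma has_real_derivative_compose_grad:
  fixes h :: "real^'n \<Rightarrow> real" and X :: "real \<Rightarrow> real^'n"
  assumes "h differentiable (at (X t))" and "(X has_vector_derivative X') (at t within S)"
  shows "((\<lambda>t. h (X t)) has_real_derivative (grad h (X t) \<bullet> X')) (at t within S)"
proof -
  have "((\<lambda>t. h (X t)) has_derivative (\<lambda>s. frechet_derivative h (at (X t)) (s *\<^sub>R X'))) (at t within S)"
    using assms(2) frechet_derivative_works[THEN iffD1, OF assms(1)]
    unfolding has_vector_derivative_def by (rule has_derivative_compose)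
  moreover have "(\<lambda>s. frechet_derivative h (at (X t)) (s *\<^sub>R X')) = (*) (grad h (X t) \<bullet> X')"
    by (simp add: fun_eq_iff frechet_derivative_eq_inner_grad[OF assms(1)] mult.commute)
  ultimately show ?thesis unfolding has_field_derivative_def by simp
qed

lemma nonpos_if_decreasing_at_zeros:
  fixes \<phi> :: "real \<Rightarrow> real"
  assumes "a \<le> b" and cont: "continuous_on {a..b} \<phi>" and "\<phi> a \<le> 0"
    and decr: "\<And>s. s \<in> {a..<b} \<Longrightarrow> \<phi> s = 0 \<Longrightarrow>
      \<exists>D<0. (\<phi> has_real_derivative D) (at s within {a..b})"
  shows "\<phi> b \<le> 0"
proof (rule ccontr)
  assume "\<not> \<phi> b \<le> 0"
  then have pos: "\<phi> b > 0" by simp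
  define A where "A = {a..b} \<inter> \<phi> -` {..0}"
  have "compact A"
    unfolding A_def compact_eq_bounded_closed
    by (auto intro: bounded_subset[of "{a..b}"] continuous_closed_preimage[OF cont])
  moreover have "a \<in> A" using assms by (simp add: A_def)
  \<comment> \<open>\<open>s\<close> is the last time in \<open>[a, b]\<close> at which \<open>\<phi>\<close> is nonpositive\<close>
  ultimately obtain s where sA: "s \<in> A" and smax: "\<And>t. t \<in> A \<Longrightarrow> t \<le> s"
    using continuous_attains_sup[of A "\<lambda>t. t"] by (auto intro: continuous_on_id)
  then have s: "a \<le> s" "s < b" "\<phi> s \<le> 0" using pos by (auto simp: A_def less_le)
  have "\<phi> s = 0"
  proof (rule ccontr)
    assume "\<phi> s \<noteq> 0"
    then obtain t where "s \<le> t" "t \<le> b" "\<phi> t = 0"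
      using IVT'[of \<phi> s 0 b] s pos continuous_on_subset[OF cont, of "{s..b}"] by auto
    then show False using smax[of t] s \<open>\<phi> s \<noteq> 0\<close> by (force simp: A_def)
  qed
  then obtain D where "D < 0" "(\<phi> has_real_derivative D) (at s within {a..b})"
    using decr s by auto
  then obtain d where "d > 0"
    and dec: "\<And>k. k > 0 \<Longrightarrow> s + k \<in> {a..b} \<Longrightarrow> k < d \<Longrightarrow> \<phi> (s + k) < \<phi> s"
    using has_real_derivative_neg_dec_right by metis
  define k where "k = min (d/2) (b - s)"
  have "k > 0" "k < d" "s + k \<in> {a..b}" using \<open>d > 0\<close> s by (auto simp: k_def)
  then have "s + k \<in> A" using dec \<open>\<phi> s = 0\<close> by (force simp: A_def)
  then show False using smax \<open>k > 0\<close> by fastforce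
qed

lemma invariant_sublevel_set:
  fixes f :: "real^'n \<Rightarrow> real^'n" and h :: "real^'n \<Rightarrow> real"
  assumes diff: "\<And>x. h differentiable (at x)"
    and boundary: "\<And>x. h x = 0 \<Longrightarrow> grad h x \<bullet> f x < 0"
  shows "invariant f {x. h x \<le> 0}"
  unfolding invariant_def
proof (intro ballI allI impI)
  fix x0 Tm X t1
  assume x0: "x0 \<in> {x. h x \<le> 0}" and sol: "is_maximal_solution f x0 Tm X" and t1: "t1 \<in> sol_dom Tm"
  have X0: "X 0 = x0"
    and X': "\<And>t. t \<in> sol_dom Tm \<Longrightarrow> (X has_vector_derivative f (X t)) (at t within sol_dom Tm)"
    using sol by (auto simp: is_maximal_solution_def is_solution_def)
  have sub: "{0..t1} \<subseteq> sol_dom Tm"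
    using t1 by (auto simp: sol_dom_def) (meson ereal_less_eq(3) order.strict_trans1)
  have deriv: "((\<lambda>t. h (X t)) has_real_derivative (grad h (X t) \<bullet> f (X t))) (at t within {0..t1})"
    if "t \<in> {0..t1}" for t
    using that sub by (intro has_real_derivative_compose_grad[OF diff] has_vector_derivative_within_subset[OF X']) auto
  have "h (X t1) \<le> 0"
  proof (rule nonpos_if_decreasing_at_zeros[where \<phi> = "\<lambda>t. h (X t)"])
    show "continuous_on {0..t1} (\<lambda>t. h (X t))"
      using deriv by (rule DERIV_continuous_on)
    show "\<exists>D<0. ((\<lambda>t. h (X t)) has_real_derivative D) (at s within {0..t1})"
      if "s \<in> {0..<t1}" "h (X s) = 0" for s
      using that deriv[of s] boundary[of "X s"] by auto
  qed (use t1 x0 X0 in \<open>auto simp: sol_dom_def\<close>)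
  then show "X t1 \<in> {x. h x \<le> 0}" by simp
qed


theorem mainTheorem3:
  fixes Astar :: "real^'na^'n" and Bstar :: "real^'nb^'n"
    and Z :: "real^'n \<Rightarrow> real^'na" and W :: "real^'n \<Rightarrow> real^'m^'nb"
    and T :: nat and xs :: "nat \<Rightarrow> real^'n" and us :: "nat \<Rightarrow> real^'m"
    and xdot :: "nat \<Rightarrow> real^'n" and z :: "nat \<Rightarrow> real^'na" and v :: "nat \<Rightarrow> real^'nb"
    and d :: "nat \<Rightarrow> real^'n" and \<omega> \<epsilon> :: real
    and Ai :: "real^('na + 'nb)^('na + 'nb)" and Bi :: "real^'n^('na + 'nb)"
    and \<tau> :: "nat \<Rightarrow> real"
    and \<l> \<eta> h :: "real^'n \<Rightarrow> real" and K :: "real^'n \<Rightarrow> real^'m"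
  assumes Z_poly: "poly_vec Z" and W_poly: "poly_mat W"
    and data_z: "\<forall>j<T. z j = Z (xs j)"
    and data_v: "\<forall>j<T. v j = W (xs j) *v us j"
    and data_xdot: "\<forall>j<T. xdot j = Astar *v z j + Bstar *v v j + d j"
    and dist: "\<forall>j<T. (norm (d j))\<^sup>2 \<le> \<omega>"
    and \<omega>_nonneg: "\<omega> \<ge> 0"
    and \<epsilon>_pos: "\<epsilon> > 0"
    and Ai_sym: "symmetric_mat Ai"
    and LMI: "nsd (block3
        (- mat 1 - (\<Sum>j<T. \<tau> j *\<^sub>R (- \<omega> *\<^sub>R mat 1 + outer (xdot j) (xdot j))))
        (transpose Bi - (\<Sum>j<T. \<tau> j *\<^sub>R transpose (- outer (vconcat (z j) (v j)) (xdot j))))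
        (transpose Bi)
        (Bi - (\<Sum>j<T. \<tau> j *\<^sub>R (- outer (vconcat (z j) (v j)) (xdot j))))
        (Ai - (\<Sum>j<T. \<tau> j *\<^sub>R outer (vconcat (z j) (v j)) (vconcat (z j) (v j))))
        0
        Bi
        0
        (- Ai))"
    and Ai_pd: "pd Ai"
    and \<tau>_nonneg: "\<forall>j<T. \<tau> j \<ge> 0"
    and \<l>_poly: "poly_fun \<l>" and \<eta>_poly: "poly_fun \<eta>" and h_poly: "poly_fun h"
    and K_poly: "poly_vec K"
    and \<eta>_pos: "\<forall>x. \<eta> x > 0"
    and H_nsd: "\<forall>x. let \<zeta> = - (matrix_inv Ai ** Bi); P = psd_sqrt (matrix_inv Ai);
                      Q = (mat 1 :: real^'n^'n);
                      y = vconcat (Z x) (W x *v K x) in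
        nsd (block3
          ((\<chi> _ _. \<l> x * h x + \<epsilon> + grad h x \<bullet> (transpose \<zeta> *v y)) :: real^unit^unit)
          (transpose (col (\<eta> x *\<^sub>R (P *v y))))
          (transpose (col (psd_sqrt Q *v grad h x)))
          (col (\<eta> x *\<^sub>R (P *v y)))
          ((- 2 * \<eta> x) *\<^sub>R mat 1)
          0
          (col (psd_sqrt Q *v grad h x))
          0
          ((- 2 * \<eta> x) *\<^sub>R mat 1))"
  shows "invariant (\<lambda>x. Astar *v Z x + Bstar *v (W x *v K x)) {x. h x \<le> 0}"
proof -
  define Ms where "Ms = hconcat Astar Bstar"
  define \<zeta> where "\<zeta> = - (matrix_inv Ai ** Bi)"
  define P where "P = psd_sqrt (matrix_inv Ai)"
  have inv: "Ai ** matrix_inv Ai = mat 1" "matrix_inv Ai ** Ai = mat 1"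
    using matrix_inv_inverse[OF pd_invertible[OF Ai_pd]] by auto
  have P: "symmetric_mat P" "P ** P ** Ai = mat 1"
    using psd_sqrt[OF matrix_inv_symmetric_psd[OF Ai_sym Ai_pd]] inv by (simp_all add: P_def)
  have ellipsoid: "(transpose Ms *v g - \<zeta> *v g) \<bullet> (Ai *v (transpose Ms *v g - \<zeta> *v g)) \<le> g \<bullet> g" for g
  proof (rule data_consistent_matrix_in_ellipsoid[OF Ai_sym _ \<tau>_nonneg])
    show "nsd (data_LMI Ai Bi \<tau> \<omega> T (\<lambda>j. vconcat (z j) (v j)) xdot)"
      using LMI by (simp add: data_LMI_def)
    show "\<forall>j<T. (norm (xdot j - Ms *v vconcat (z j) (v j)))\<^sup>2 \<le> \<omega>"
      using data_xdot dist by (simp add: Ms_def hconcat_mult_vconcat)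
    show "Ai ** \<zeta> = - Bi"
      using inv(1) unfolding matrix_eq
      by (simp add: \<zeta>_def uminus_mult_vec mult_vec_uminus flip: matrix_vector_mul_assoc)
  qed
  show ?thesis
  proof (rule invariant_sublevel_set[OF poly_fun_differentiable[OF h_poly]])
    fix x assume "h x = 0"
    define y where "y = vconcat (Z x) (W x *v K x)"
    define g where "g = grad h x"
    have "\<l> x * h x + \<epsilon> + g \<bullet> (transpose \<zeta> *v y) + norm (\<eta> x *\<^sub>R (P *v y)) * norm g / \<eta> x \<le> 0"
      using arrow_block3_nsd[OF \<eta>_pos[rule_format]] H_nsd[rule_format, of x]
      unfolding Let_def psd_sqrt_mat_1 matrix_vector_mul_lid
        \<zeta>_def[symmetric] P_def[symmetric] y_def[symmetric] g_def[symmetric]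
      by blast
    moreover have "g \<bullet> (Ms *v y) \<le> g \<bullet> (transpose \<zeta> *v y) + norm g * norm (P *v y)"
      by (rule ellipsoid_inner_bound[OF P ellipsoid])
    ultimately show "grad h x \<bullet> (Astar *v Z x + Bstar *v (W x *v K x)) < 0"
      using \<open>h x = 0\<close> \<epsilon>_pos \<eta>_pos[rule_format, of x]
      by (simp add: Ms_def hconcat_mult_vconcat g_def y_def mult.commute)
  qed
qed

end
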